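(* Let $\varphi=\frac{1+\sqrt5}{2}$ and $\theta_0=\left(\frac12,\frac1\varphi,\frac1{\varphi^2}\right)$. There exists a partition $\mathcal P=\bigcup_{1\le i\le 7}P_{a_i}$ of the face $X=0$ of the cube $[0,1]^3$ and a map $\Phi$ from $\{a_1,\dots,a_7\}$ to $\{a,b,c\}^*$, given by $\Phi(a_1)=acb$, $\Phi(a_2)=abc$, $\Phi(a_3)=abcb$, $\Phi(a_4)=abb$, $\Phi(a_5)=abbc$, $\Phi(a_6)=acbb$, $\Phi(a_7)=ab$, such that for every $m\in P_{a_i}$ with well defined orbit, $\Phi(a_i)$ is the first return word of $a$ in $f_{\theta_0}(m)$.
   Context: For $m$ such that the line $m+\mathbb R\theta_0$ contains no point with more than one integer coordinate, $f_{\theta_0}(m)\in\{a,b,c\}^{\mathbb N}$ records, in order, the successive intersections of the half line $m+\mathbb R_+\theta_0$ with the planes $X=n$ (letter $a$), $Y=n$ (letter $b$), $Z=n$ (letter $c$), $n\in\mathbb Z$; for $m$ on the face $X=0$ it begins with $a$. The return words of $a$ in such a word $u$ are the factors of $u$ starting at an occurrence of $a$ and ending just before the next occurrence of $a$; the first return word is the prefix of $u$ preceding the second occurrence of $a$. *)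

theory Defs
  imports Complex_Main
begin

datatype letter = A | B | C

type_synonym point = "real \<times> real \<times> real"

fun coord :: "letter \<Rightarrow> point \<Rightarrow> real" where
  "coord A (x, y, z) = x"
| "coord B (x, y, z) = y"
| "coord C (x, y, z) = z"

definition phi :: real where "phi = (1 + sqrt 5) / 2"

definition theta0 :: point where "theta0 = (1/2, 1/phi, 1/phi^2)"

definition move :: "point \<Rightarrow> point \<Rightarrow> real \<Rightarrow> point" where
  "move m \<theta> t = (fst m + t * fst \<theta>, fst (snd m) + t * fst (snd \<theta>),
                   snd (snd m) + t * snd (snd \<theta>))"

definition well_defined_orbit :: "point \<Rightarrow> point \<Rightarrow> bool" where
  "well_defined_orbit \<theta> m \<longleftrightarrow>
     (\<forall>t::real. \<forall>l l'. l \<noteq> l' \<longrightarrow>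
        \<not> (coord l (move m \<theta> t) \<in> \<int> \<and> coord l' (move m \<theta> t) \<in> \<int>))"

definition is_coding :: "point \<Rightarrow> point \<Rightarrow> (nat \<Rightarrow> letter) \<Rightarrow> bool" where
  "is_coding \<theta> m w \<longleftrightarrow>
     (\<exists>ts :: nat \<Rightarrow> real. strict_mono ts \<and>
        range ts = {t. t \<ge> 0 \<and> (\<exists>l. coord l (move m \<theta> t) \<in> \<int>)} \<and>
        (\<forall>k. coord (w k) (move m \<theta> (ts k)) \<in> \<int>))"

definition orbit_word :: "point \<Rightarrow> point \<Rightarrow> nat \<Rightarrow> letter" where
  "orbit_word \<theta> m = (THE w. is_coding \<theta> m w)"

definition first_return_word :: "(nat \<Rightarrow> letter) \<Rightarrow> letter list" where
  "first_return_word u =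
     map u [0..<(LEAST n. u n = A \<and> (\<exists>n1 < n. u n1 = A))]"

definition face_X0 :: "point set" where
  "face_X0 = {(0, y, z) | y z. 0 \<le> y \<and> y \<le> 1 \<and> 0 \<le> z \<and> z \<le> 1}"

datatype sym = a1 | a2 | a3 | a4 | a5 | a6 | a7

fun Phi :: "sym \<Rightarrow> letter list" where
  "Phi a1 = [A, C, B]"
| "Phi a2 = [A, B, C]"
| "Phi a3 = [A, B, C, B]"
| "Phi a4 = [A, B, B]"
| "Phi a5 = [A, B, B, C]"
| "Phi a6 = [A, C, B, B]"
| "Phi a7 = [A, B]"

end

theory Submission
  imports Defs
begin

(* Since theta0 = (1/2, 1/phi, 1/phi^2), the orbit of a point (0, y, z) of the face X = 0 next
   meets an integer plane X = n at time t = 2.  As 1/2 < 1/phi < 1, in between it crosses Y = 1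
   exactly once and Y = 2 at most once, and as 1/phi^2 < 1/2 it crosses Z = 1 at most once.  The
   first return word of a is therefore a followed by the letters of these crossings in time order,
   and the seven possible orders of the crossing times give the cells P_{a_i}. *)

definition next_in :: "'a::linorder set \<Rightarrow> 'a \<Rightarrow> 'a" where
  "next_in S r = (LEAST t. t \<in> S \<and> r < t)"

lemma next_in_least:
  fixes S :: "'a::linorder set"
  assumes fin: "\<And>T. finite {s \<in> S. s \<le> T}" and "s \<in> S" "r < s"
  shows "next_in S r \<in> S" "r < next_in S r" "\<And>u. u \<in> S \<Longrightarrow> r < u \<Longrightarrow> next_in S r \<le> u"
proof -
  define F where "F = {t \<in> S. t \<le> s \<and> r < t}"
  have F: "finite F" "s \<in> F"
    using fin[of s] assms by (auto simp: F_def intro: rev_finite_subset)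
  then have min_in: "Min F \<in> F"
    by (intro Min_in) auto
  moreover have min_le: "Min F \<le> u" if "u \<in> S" "r < u" for u
  proof (cases "u \<le> s")
    case True
    then show ?thesis
      using F that by (intro Min_le) (auto simp: F_def)
  next
    case False
    then show ?thesis
      using F Min_le[of F s] by (meson not_le order.strict_implies_order order_trans)
  qed
  ultimately have "next_in S r = Min F"
    unfolding next_in_def by (intro Least_equality) (auto simp: F_def)
  then show "next_in S r \<in> S" "r < next_in S r" "\<And>u. u \<in> S \<Longrightarrow> r < u \<Longrightarrow> next_in S r \<le> u"
    using min_in min_le by (auto simp: F_def)
qed

lemma strict_mono_enumeration_exists:
  fixes S :: "'a::linorder set"
  assumes lower: "S \<subseteq> {a<..}" and fin: "\<And>T. finite {s \<in> S. s \<le> T}"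
    and unbounded: "\<And>r. \<exists>s\<in>S. r < s"
  shows "\<exists>ts :: nat \<Rightarrow> 'a. strict_mono ts \<and> range ts = S"
proof -
  define ts where "ts k = (next_in S ^^ Suc k) a" for k
  have ts_Suc: "ts (Suc k) = next_in S (ts k)" for k
    by (simp add: ts_def)
  have next_in_S: "next_in S r \<in> S" "r < next_in S r"
    and next_in_le: "\<And>u. u \<in> S \<Longrightarrow> r < u \<Longrightarrow> next_in S r \<le> u" for r
    using next_in_least[OF fin] unbounded by meson+
  have mono: "strict_mono ts"
    unfolding strict_mono_Suc_iff using next_in_S by (simp add: ts_Suc)
  have in_S: "ts k \<in> S" for k
    using next_in_S by (cases k) (simp_all add: ts_def)
  have "s \<in> range ts" if s: "s \<in> S" for s
  proof -
    have "\<exists>k. s \<le> ts k"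
    proof (rule ccontr)
      assume "\<nexists>k. s \<le> ts k"
      then have "range ts \<subseteq> {t \<in> S. t \<le> s}"
        using in_S by (auto simp: not_le less_imp_le)
      then have "finite (range ts)"
        using fin by (rule finite_subset)
      moreover have "inj ts"
        using mono by (rule strict_mono_imp_inj_on)
      ultimately show False
        by (simp add: finite_image_iff)
    qed
    define k where "k = (LEAST k. s \<le> ts k)"
    have "s \<le> ts k"
      unfolding k_def by (rule LeastI_ex) fact
    moreover have "ts k \<le> s"
    proof (cases k)
      case 0
      then show ?thesis
        using next_in_le[of s a] s lower by (auto simp: ts_def)
    next
      case (Suc j)
      then have "ts j < s"
        using not_less_Least[of j "\<lambda>k. s \<le> ts k"] by (simp add: k_def)
      then show ?thesis
        using next_in_le s Suc by (simp add: ts_Suc)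
    qed
    ultimately show ?thesis
      by (metis antisym rangeI)
  qed
  then have "range ts = S"
    using in_S by auto
  with mono show ?thesis
    by blast
qed

lemma strict_mono_range_unique:
  fixes f g :: "nat \<Rightarrow> 'a::linorder"
  assumes f: "strict_mono f" and g: "strict_mono g" and range: "range f = range g"
  shows "f = g"
proof
  fix k
  show "f k = g k"
  proof (induction k rule: less_induct)
    case (less k)
    obtain j where j: "f k = g j"
      using range by (metis rangeE rangeI)
    obtain i where i: "g k = f i"
      using range by (metis rangeE rangeI)
    have "k \<le> j"
    proof (rule ccontr)
      assume "\<not> k \<le> j"
      then have "f j = f k"
        using less j by simp
      then show False
        using \<open>\<not> k \<le> j\<close> by (simp add: strict_mono_eq[OF f])
    qed
    moreover have "k \<le> i"
    proof (rule ccontr)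
      assume "\<not> k \<le> i"
      then have "g i = g k"
        using less i by simp
      then show False
        using \<open>\<not> k \<le> i\<close> by (simp add: strict_mono_eq[OF g])
    qed
    ultimately show "f k = g k"
      using i j f g by (metis order_antisym strict_mono_less_eq)
  qed
qed

lemma strict_mono_prefix_eq_nth:
  fixes ts :: "nat \<Rightarrow> 'a::linorder"
  assumes mono: "strict_mono ts" and sorted: "sorted_wrt (<) xs" and "xs \<noteq> []"
    and prefix: "{t \<in> range ts. t \<le> last xs} = set xs"
  shows "k < length xs \<Longrightarrow> ts k = xs ! k"
proof -
  have xs_less_iff: "xs ! i < xs ! j \<longleftrightarrow> i < j" if "i < length xs" "j < length xs" for i j
    using sorted that by (metis linorder_neq_iff order.asym sorted_wrt_nth_less)
  have le_last: "xs ! i \<le> last xs" if "i < length xs" for i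
    using that xs_less_iff[of i "length xs - 1"] \<open>xs \<noteq> []\<close>
    by (cases "i = length xs - 1") (auto simp: last_conv_nth)
  have in_xs: "t \<in> set xs" if "t \<in> range ts" "t \<le> last xs" for t
    using prefix that by blast
  have in_ts: "xs ! i \<in> range ts" if "i < length xs" for i
    using prefix that nth_mem by blast
  show "k < length xs \<Longrightarrow> ts k = xs ! k"
  proof (induction k)
    case 0
    obtain j where "xs ! 0 = ts j"
      using in_ts 0 by blast
    then have le: "ts 0 \<le> xs ! 0"
      using mono by (simp add: strict_mono_less_eq)
    then obtain i where "i < length xs" "ts 0 = xs ! i"
      using in_xs[of "ts 0"] le_last 0 by (fastforce simp: in_set_conv_nth)
    then show ?case
      using le xs_less_iff[of i 0] 0 by fastforce
  next
    case (Suc k)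
    then have ts_k: "ts k = xs ! k"
      by simp
    obtain j where j: "xs ! Suc k = ts j"
      using in_ts Suc.prems by blast
    have "ts k < ts j"
      using ts_k j xs_less_iff[of k "Suc k"] Suc.prems by simp
    then have "Suc k \<le> j"
      using mono by (simp add: strict_mono_less Suc_le_eq)
    then have le: "ts (Suc k) \<le> xs ! Suc k"
      using mono j by (simp add: strict_mono_less_eq)
    then obtain i where i: "i < length xs" "ts (Suc k) = xs ! i"
      using in_xs[of "ts (Suc k)"] le_last[OF Suc.prems] by (fastforce simp: in_set_conv_nth)
    have "xs ! k < xs ! i"
      using i ts_k mono by (metis lessI strict_mono_less)
    then have "Suc k \<le> i"
      using xs_less_iff i Suc.prems by simp
    then show ?case
      using i le xs_less_iff[of i "Suc k"] Suc.prems by fastforce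
  qed
qed

lemma coord_move: "coord l (move m \<theta> t) = coord l m + t * coord l \<theta>"
  by (cases m rule: prod_cases3; cases \<theta> rule: prod_cases3; cases l) (auto simp: move_def)

lemma ex_letter_iff: "(\<exists>l. P l) \<longleftrightarrow> P A \<or> P B \<or> P C"
  by (metis letter.exhaust)

definition hit_times :: "point \<Rightarrow> point \<Rightarrow> real set" where
  "hit_times \<theta> m = {t. t \<ge> 0 \<and> (\<exists>l. coord l (move m \<theta> t) \<in> \<int>)}"

lemma is_coding_iff:
  "is_coding \<theta> m w \<longleftrightarrow>
     (\<exists>ts. strict_mono ts \<and> range ts = hit_times \<theta> m \<and>
        (\<forall>k. coord (w k) (move m \<theta> (ts k)) \<in> \<int>))"
  by (simp add: is_coding_def hit_times_def)

lemma finite_affine_preimage_Ints: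
  fixes c v T :: real
  assumes "v > 0"
  shows "finite {t. 0 \<le> t \<and> t \<le> T \<and> c + t * v \<in> \<int>}"
proof -
  have "{t. 0 \<le> t \<and> t \<le> T \<and> c + t * v \<in> \<int>} \<subseteq>
          (\<lambda>t. c + t * v) -` {x \<in> \<int>. c \<le> x \<and> x \<le> c + T * v}"
    using assms by (auto intro: mult_right_mono)
  moreover have "inj (\<lambda>t. c + t * v)"
    using assms by (auto intro: injI)
  ultimately show ?thesis
    using finite_int_segment finite_vimageI finite_subset by blast
qed

lemma finite_hit_times_le:
  assumes "\<And>l. coord l \<theta> > 0"
  shows "finite {t \<in> hit_times \<theta> m. t \<le> T}"
proof (rule finite_subset)
  show "{t \<in> hit_times \<theta> m. t \<le> T} \<subseteq>
          (\<Union>l\<in>{A, B, C}. {t. 0 \<le> t \<and> t \<le> T \<and> coord l m + t * coord l \<theta> \<in> \<int>})"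
    by (auto simp: hit_times_def coord_move ex_letter_iff)
qed (use assms finite_affine_preimage_Ints in auto)

lemma hit_times_unbounded:
  assumes "coord A \<theta> > 0"
  shows "\<exists>t \<in> hit_times \<theta> m. r < t"
proof -
  define x v where "x = coord A m" and "v = coord A \<theta>"
  obtain n :: int where n: "x + (max r 0 + 1) * v < of_int n"
    using ex_less_of_int by blast
  define t where "t = (of_int n - x) / v"
  have "t * v = of_int n - x"
    using assms by (simp add: t_def v_def)
  then have "(max r 0 + 1) * v < t * v"
    using n by simp
  then have "max r 0 + 1 < t"
    using assms by (simp add: v_def)
  moreover have "coord A (move m \<theta> t) \<in> \<int>"
    using \<open>t * v = of_int n - x\<close> by (simp add: coord_move x_def v_def)
  ultimately show ?thesis
    unfolding hit_times_def by (intro bexI[of _ t]) auto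
qed

lemma well_defined_orbit_letter_unique:
  assumes "well_defined_orbit \<theta> m"
    and "coord l (move m \<theta> t) \<in> \<int>" "coord l' (move m \<theta> t) \<in> \<int>"
  shows "l = l'"
  using assms unfolding well_defined_orbit_def by blast

lemma coding_exists:
  assumes pos: "\<And>l. coord l \<theta> > 0"
  shows "\<exists>w. is_coding \<theta> m w"
proof -
  have "hit_times \<theta> m \<subseteq> {-1<..}"
    by (auto simp: hit_times_def)
  from strict_mono_enumeration_exists[OF this finite_hit_times_le[OF pos] hit_times_unbounded[OF pos]]
  obtain ts :: "nat \<Rightarrow> real" where ts: "strict_mono ts" "range ts = hit_times \<theta> m"
    by blast
  define w where "w k = (SOME l. coord l (move m \<theta> (ts k)) \<in> \<int>)" for k
  have "coord (w k) (move m \<theta> (ts k)) \<in> \<int>" for k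
  proof -
    have "ts k \<in> hit_times \<theta> m"
      using ts by blast
    then show ?thesis
      unfolding w_def hit_times_def by (auto intro: someI_ex)
  qed
  then show ?thesis
    using ts unfolding is_coding_iff by blast
qed

lemma coding_unique:
  assumes wd: "well_defined_orbit \<theta> m" and "is_coding \<theta> m w" "is_coding \<theta> m w'"
  shows "w = w'"
proof
  fix k
  obtain ts ts' where "strict_mono ts" "strict_mono ts'" "range ts = range ts'"
    and "coord (w k) (move m \<theta> (ts k)) \<in> \<int>" "coord (w' k) (move m \<theta> (ts' k)) \<in> \<int>"
    using assms(2,3) unfolding is_coding_iff by metis
  then show "w k = w' k"
    using strict_mono_range_unique well_defined_orbit_letter_unique[OF wd] by metis
qed

lemma orbit_word_is_coding:
  assumes "\<And>l. coord l \<theta> > 0" and "well_defined_orbit \<theta> m"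
  shows "is_coding \<theta> m (orbit_word \<theta> m)"
  unfolding orbit_word_def
  using coding_exists[OF assms(1)] coding_unique[OF assms(2)] by (metis theI)

lemma first_return_word_eqI:
  assumes "map u [0..<Suc (Suc (length ws))] = A # ws @ [A]" and "A \<notin> set ws"
  shows "first_return_word u = A # ws"
proof -
  let ?n = "Suc (length ws)"
  have u: "u k = (A # ws @ [A]) ! k" if "k \<le> ?n" for k
    using that arg_cong[OF assms(1), of "\<lambda>xs. xs ! k"] by (simp del: upt_Suc)
  have "(LEAST n. u n = A \<and> (\<exists>n1 < n. u n1 = A)) = ?n"
  proof (rule Least_equality)
    show "u ?n = A \<and> (\<exists>n1 < ?n. u n1 = A)"
      using u[of ?n] u[of 0] by (auto simp: nth_append)
  next
    fix n assume n: "u n = A \<and> (\<exists>n1 < n. u n1 = A)"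
    show "?n \<le> n"
    proof (rule ccontr)
      assume "\<not> ?n \<le> n"
      then have "ws ! (n - 1) = A" "0 < n" "n - 1 < length ws"
        using n u[of n] by (auto simp: nth_Cons' nth_append split: if_splits)
      then show False
        using assms(2) nth_mem by metis
    qed
  qed
  moreover have "map u [0..<?n] = take ?n (map u [0..<Suc ?n])"
    by (simp add: take_map del: upt_Suc)
  ultimately show ?thesis
    using assms(1) by (simp add: first_return_word_def del: upt_Suc)
qed

lemma first_return_word_of_coding:
  assumes wd: "well_defined_orbit \<theta> m" and coding: "is_coding \<theta> m w"
    and sorted: "sorted_wrt (<) (0 # map fst M @ [T])"
    and start: "coord A m \<in> \<int>" and return: "coord A (move m \<theta> T) \<in> \<int>"
    and hits: "\<And>t l. (t, l) \<in> set M \<Longrightarrow> l \<noteq> A \<and> coord l (move m \<theta> t) \<in> \<int>"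
    and complete: "{t \<in> hit_times \<theta> m. t \<le> T} = insert 0 (insert T (fst ` set M))"
  shows "first_return_word w = A # map snd M"
proof -
  define L where "L = (0, A) # M @ [(T, A)]"
  obtain ts where ts: "strict_mono ts" "range ts = hit_times \<theta> m"
    and w: "\<And>k. coord (w k) (move m \<theta> (ts k)) \<in> \<int>"
    using coding unfolding is_coding_iff by blast
  have times: "map fst L = 0 # map fst M @ [T]"
    by (simp add: L_def)
  have ts_L: "ts k = map fst L ! k" if "k < length L" for k
  proof (rule strict_mono_prefix_eq_nth[OF ts(1)])
    have "set (map fst L) = insert 0 (insert T (fst ` set M))"
      unfolding times by auto
    then show "{t \<in> range ts. t \<le> last (map fst L)} = set (map fst L)"
      using complete ts(2) by (simp add: times)
  qed (use sorted that in \<open>simp_all add: times L_def\<close>)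
  have "move m \<theta> 0 = m"
    by (cases m rule: prod_cases3) (simp add: move_def)
  then have L_hits: "coord l (move m \<theta> t) \<in> \<int>" if "(t, l) \<in> set L" for t l
    using that start return hits[of t l] by (auto simp: L_def)
  have w_L: "w k = snd (L ! k)" if "k < length L" for k
  proof (rule well_defined_orbit_letter_unique[OF wd, where t = "fst (L ! k)"])
    show "coord (w k) (move m \<theta> (fst (L ! k))) \<in> \<int>"
      using w[of k] ts_L[OF that] that by simp
  qed (use L_hits[of "fst (L ! k)" "snd (L ! k)"] that in simp)
  have "map w [0..<length L] = map snd L"
    by (rule nth_equalityI) (simp_all add: w_L)
  then have "map w [0..<Suc (Suc (length (map snd M)))] = A # map snd M @ [A]"
    by (simp add: L_def del: upt_Suc)
  moreover have "A \<notin> set (map snd M)"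
    using hits by force
  ultimately show ?thesis
    by (rule first_return_word_eqI)
qed

lemma Ints_between_neg1_3_cases:
  fixes x :: real
  assumes "x \<in> \<int>" "-1 < x" "x < 3"
  shows "x = 0 \<or> x = 1 \<or> x = 2"
proof -
  obtain k where k: "x = of_int k"
    using assms(1) by (auto elim: Ints_cases)
  then have "-1 < k" "k < 3"
    using assms by simp_all
  then have "k = 0 \<or> k = 1 \<or> k = 2"
    by arith
  then show ?thesis
    using k by auto
qed

lemma hit_times_up_to_2:
  fixes v u y z :: real
  assumes v: "1/2 < v" "v < 1" and u: "0 < u" "u < 1/2"
    and y: "0 < y" "y < 1" and z: "0 < z" "z < 1"
  shows "{t \<in> hit_times (1/2, v, u) (0, y, z). t \<le> 2} =
           {0, 2, (1 - y) / v} \<union> {(2 - y) / v, (1 - z) / u} \<inter> {..2}"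
    (is "?H = ?R")
proof
  show "?H \<subseteq> ?R"
  proof
    fix t assume "t \<in> ?H"
    then have t: "0 \<le> t" "t \<le> 2" and hit: "t / 2 \<in> \<int> \<or> y + t * v \<in> \<int> \<or> z + t * u \<in> \<int>"
      by (auto simp: hit_times_def move_def ex_letter_iff)
    have tv: "0 \<le> t * v" "t * v \<le> 2 * v" and tu: "0 \<le> t * u" "t * u \<le> 2 * u"
      using t v u by (simp_all add: mult_right_mono)
    have "t / 2 \<in> \<int> \<Longrightarrow> t = 0 \<or> t = 2"
      using Ints_between_neg1_3_cases[of "t / 2"] t by auto
    moreover have "y + t * v \<in> \<int> \<Longrightarrow> y + t * v = 1 \<or> y + t * v = 2"
      using Ints_between_neg1_3_cases[of "y + t * v"] tv v y by auto
    moreover have "z + t * u \<in> \<int> \<Longrightarrow> z + t * u = 1"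
      using Ints_between_neg1_3_cases[of "z + t * u"] tu u z by auto
    ultimately show "t \<in> ?R"
      using hit v u t by (auto simp: field_simps)
  qed
next
  have "(1 - y) / v < 2"
    using v y by (simp add: field_simps)
  then show "?R \<subseteq> ?H"
    using v u y z by (auto simp: hit_times_def move_def ex_letter_iff)
qed

(* For the orbit of (0, y, z) in direction (1/2, v, u): b1 = (1 - y)/v and b2 = (2 - y)/v are the
   times at which it crosses Y = 1 and Y = 2, c = (1 - z)/u the time at which it crosses Z = 1, and
   it reaches X = 1 at time 2. *)
definition crossing_class :: "real \<Rightarrow> real \<Rightarrow> real \<Rightarrow> sym" where
  "crossing_class b1 b2 c =
     (if 2 \<le> b2 then (if 2 \<le> c then a7 else if b1 < c then a2 else a1)
      else (if 2 \<le> c then a4 else if c < b1 then a6 else if c < b2 then a3 else a5))"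

lemma Phi_crossing_class:
  fixes b1 b2 c :: real
  assumes order: "0 < b1" "b1 < b2" "b1 < 2" "0 < c" "b2 \<noteq> 2" "c \<noteq> 2" "b1 \<noteq> c" "b2 \<noteq> c"
    and word: "\<And>M. sorted_wrt (<) (0 # map fst M @ [2]) \<Longrightarrow>
                 set M \<subseteq> {(b1, B), (b2, B), (c, C)} \<Longrightarrow>
                 fst ` set M = {b1} \<union> {b2, c} \<inter> {..2} \<Longrightarrow> w = A # map snd M"
  shows "w = Phi (crossing_class b1 b2 c)"
proof -
  consider "2 < b2" "2 < c" | "2 < b2" "b1 < c" "c < 2" | "2 < b2" "c < b1"
    | "b2 < 2" "2 < c" | "b2 < 2" "c < b1" | "b2 < 2" "b1 < c" "c < b2" | "b2 < 2" "b2 < c" "c < 2"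
    using order by argo
  then show ?thesis
  proof cases
    case 1
    with word[of "[(b1, B)]"] order show ?thesis
      by (simp add: crossing_class_def Int_insert_left insert_commute)
  next
    case 2
    with word[of "[(b1, B), (c, C)]"] order show ?thesis
      by (simp add: crossing_class_def Int_insert_left insert_commute)
  next
    case 3
    with word[of "[(c, C), (b1, B)]"] order show ?thesis
      by (simp add: crossing_class_def Int_insert_left insert_commute)
  next
    case 4
    with word[of "[(b1, B), (b2, B)]"] order show ?thesis
      by (simp add: crossing_class_def Int_insert_left insert_commute)
  next
    case 5
    with word[of "[(c, C), (b1, B), (b2, B)]"] order show ?thesis
      by (simp add: crossing_class_def Int_insert_left insert_commute)
  next
    case 6
    with word[of "[(b1, B), (c, C), (b2, B)]"] order show ?thesis
      by (simp add: crossing_class_def Int_insert_left insert_commute)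
  next
    case 7
    with word[of "[(b1, B), (b2, B), (c, C)]"] order show ?thesis
      by (simp add: crossing_class_def Int_insert_left insert_commute)
  qed
qed

lemma first_return_word_crossing_class:
  fixes v u y z :: real
  assumes v: "1/2 < v" "v < 1" and u: "0 < u" "u < 1/2"
    and yz: "0 \<le> y" "y \<le> 1" "0 \<le> z" "z \<le> 1"
    and wd: "well_defined_orbit (1/2, v, u) (0, y, z)"
    and coding: "is_coding (1/2, v, u) (0, y, z) w"
  shows "first_return_word w = Phi (crossing_class ((1 - y) / v) ((2 - y) / v) ((1 - z) / u))"
proof -
  have coords: "coord A (move (0, y, z) (1/2, v, u) t) = t / 2"
    "coord B (move (0, y, z) (1/2, v, u) t) = y + t * v"
    "coord C (move (0, y, z) (1/2, v, u) t) = z + t * u" for t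
    by (simp_all add: move_def)
  have one_letter: "l = l'" if "coord l (move (0, y, z) (1/2, v, u) t) \<in> \<int>"
    "coord l' (move (0, y, z) (1/2, v, u) t) \<in> \<int>" for l l' t
    using well_defined_orbit_letter_unique[OF wd that] .
  have "y \<notin> \<int>" "z \<notin> \<int>"
    using one_letter[of A 0 B] one_letter[of A 0 C] by (auto simp: coords)
  then have y: "0 < y" "y < 1" and z: "0 < z" "z < 1"
    using yz by (auto simp: order_le_less)
  define b1 b2 c where "b1 = (1 - y) / v" and "b2 = (2 - y) / v" and "c = (1 - z) / u"
  have crossings: "y + b1 * v = 1" "y + b2 * v = 2" "z + c * u = 1"
    using v u by (simp_all add: b1_def b2_def c_def)
  have "0 < b1" "b1 < b2" "b1 < 2" "0 < c"
    using v u y z by (simp_all add: b1_def b2_def c_def field_simps)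
  moreover have "b2 \<noteq> 2" "c \<noteq> 2" "b1 \<noteq> c" "b2 \<noteq> c"
    using one_letter[of A 2 B] one_letter[of A 2 C] one_letter[of B b1 C] one_letter[of B b2 C] crossings
    by (auto simp: coords)
  ultimately show ?thesis
    unfolding b1_def[symmetric] b2_def[symmetric] c_def[symmetric]
  proof (rule Phi_crossing_class)
    fix M :: "(real \<times> letter) list"
    assume sorted: "sorted_wrt (<) (0 # map fst M @ [2])"
      and letters: "set M \<subseteq> {(b1, B), (b2, B), (c, C)}"
      and times: "fst ` set M = {b1} \<union> {b2, c} \<inter> {..2}"
    show "first_return_word w = A # map snd M"
    proof (rule first_return_word_of_coding[OF wd coding sorted])
      show "l \<noteq> A \<and> coord l (move (0, y, z) (1/2, v, u) t) \<in> \<int>" if "(t, l) \<in> set M" for t l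
        using that letters crossings by (auto simp: coords)
      show "{t \<in> hit_times (1/2, v, u) (0, y, z). t \<le> 2} = insert 0 (insert 2 (fst ` set M))"
        unfolding hit_times_up_to_2[OF v u y z] times by (auto simp: b1_def b2_def c_def)
    qed (simp_all add: coords)
  qed
qed

lemma sqrt_5_bounds: "2.23 < sqrt (5::real)" "sqrt (5::real) < 2.24"
proof -
  show "2.23 < sqrt (5::real)"
    by (rule real_less_rsqrt) (simp add: power2_eq_square)
  have "sqrt (5::real) < sqrt (2.24^2)"
    by (subst real_sqrt_less_iff) (simp add: power2_eq_square)
  then show "sqrt (5::real) < 2.24"
    by simp
qed

lemma inverse_phi_eq: "1 / phi = (sqrt 5 - 1) / 2" "1 / phi^2 = (3 - sqrt 5) / 2"
proof -
  have "(sqrt 5 - 1) * (1 + sqrt 5) = (2 * 2::real)"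
    by (simp add: algebra_simps)
  moreover have "1 + sqrt 5 \<noteq> (0::real)"
    by (simp add: add_nonneg_eq_0_iff)
  ultimately show inv: "1 / phi = (sqrt 5 - 1) / 2"
    by (simp add: phi_def divide_eq_eq)
  have "((sqrt 5 - 1) / 2)^2 = (3 - sqrt 5) / (2::real)"
    by (simp add: power_divide power2_diff)
  then show "1 / phi^2 = (3 - sqrt 5) / 2"
    by (metis inv power_one_over)
qed

lemma crossing_class_witnesses:
  fixes v u :: real
  assumes "0.61 < v" "v < 0.62" "0.37 < u" "u < 0.39"
  defines "cls y z \<equiv> crossing_class ((1 - y) / v) ((2 - y) / v) ((1 - z) / u)"
  shows "cls 0.1 0.9 = a1" "cls 0.7 0.3 = a2" "cls 0.9 0.5 = a3" "cls 0.9 0.1 = a4"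
    "cls 0.99 0.3 = a5" "cls 0.8 0.95 = a6" "cls 0.1 0.1 = a7"
  using assms by (simp_all add: crossing_class_def field_simps)

lemma crossing_class_surj:
  fixes v u :: real
  assumes "0.61 < v" "v < 0.62" "0.37 < u" "u < 0.39"
  shows "\<exists>y z. 0 \<le> y \<and> y \<le> 1 \<and> 0 \<le> z \<and> z \<le> 1 \<and>
           crossing_class ((1 - y) / v) ((2 - y) / v) ((1 - z) / u) = s"
proof (cases s)
  case a1
  with crossing_class_witnesses[OF assms] show ?thesis
    by (intro exI[of _ "0.1"] exI[of _ "0.9"]) simp
next
  case a2
  with crossing_class_witnesses[OF assms] show ?thesis
    by (intro exI[of _ "0.7"] exI[of _ "0.3"]) simp
next
  case a3
  with crossing_class_witnesses[OF assms] show ?thesis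
    by (intro exI[of _ "0.9"] exI[of _ "0.5"]) simp
next
  case a4
  with crossing_class_witnesses[OF assms] show ?thesis
    by (intro exI[of _ "0.9"] exI[of _ "0.1"]) simp
next
  case a5
  with crossing_class_witnesses[OF assms] show ?thesis
    by (intro exI[of _ "0.99"] exI[of _ "0.3"]) simp
next
  case a6
  with crossing_class_witnesses[OF assms] show ?thesis
    by (intro exI[of _ "0.8"] exI[of _ "0.95"]) simp
next
  case a7
  with crossing_class_witnesses[OF assms] show ?thesis
    by (intro exI[of _ "0.1"] exI[of _ "0.1"]) simp
qed

theorem lemma4:
  shows "\<exists>P :: sym \<Rightarrow> point set.
           (\<forall>s. P s \<noteq> {}) \<and>
           (\<forall>s s'. s \<noteq> s' \<longrightarrow> P s \<inter> P s' = {}) \<and>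
           (\<Union>s. P s) = face_X0 \<and>
           (\<forall>s. \<forall>m \<in> P s. well_defined_orbit theta0 m \<longrightarrow>
                first_return_word (orbit_word theta0 m) = Phi s)"
proof -
  define v u where "v = 1 / phi" and "u = 1 / phi^2"
  have theta0: "theta0 = (1/2, v, u)"
    by (simp add: theta0_def v_def u_def)
  have bounds: "0.61 < v" "v < 0.62" "0.37 < u" "u < 0.39"
    using sqrt_5_bounds by (simp_all add: v_def u_def inverse_phi_eq)
  define P where "P s = {(0 :: real, y, z) | y z. 0 \<le> y \<and> y \<le> 1 \<and> 0 \<le> z \<and> z \<le> 1 \<and>
                   crossing_class ((1 - y) / v) ((2 - y) / v) ((1 - z) / u) = s}" for s
  have "P s \<noteq> {}" for s
    using crossing_class_surj[OF bounds, of s] by (auto simp: P_def)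
  moreover have "P s \<inter> P s' = {}" if "s \<noteq> s'" for s s'
    using that by (auto simp: P_def)
  moreover have "(\<Union>s. P s) = face_X0"
    by (auto simp: P_def face_X0_def)
  moreover have "first_return_word (orbit_word theta0 m) = Phi s"
    if "m \<in> P s" and wd: "well_defined_orbit theta0 m" for s m
  proof -
    have "coord l theta0 > 0" for l
      using bounds by (cases l) (simp_all add: theta0)
    then have "is_coding theta0 m (orbit_word theta0 m)"
      using orbit_word_is_coding wd by blast
    moreover obtain y z where "m = (0, y, z)" "0 \<le> y" "y \<le> 1" "0 \<le> z" "z \<le> 1"
      and "crossing_class ((1 - y) / v) ((2 - y) / v) ((1 - z) / u) = s"
      using \<open>m \<in> P s\<close> by (auto simp: P_def)
    ultimately show ?thesis
      using first_return_word_crossing_class[of v u y z] bounds wd by (simp add: theta0)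
  qed
  ultimately show ?thesis
    by (intro exI[of _ P]) blast
qed

end
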